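(* If a CRN protocol $\Pi=(\mathcal{S},\mathcal{R})$ is stably (resp. haltingly) correct with respect to an interface $\mathcal{I}$ under a weakly fair scheduler, then $\Pi$ is also stably (resp. haltingly) correct with respect to $\mathcal{I}$ under a strongly fair scheduler.
   Context: CRN protocol $\Pi=(\mathcal{S},\mathcal{R})$: finite species set $\mathcal{S}$, finite reaction set $\mathcal{R}\subset\mathbb{N}^{\mathcal{S}}\times\mathbb{N}^{\mathcal{S}}$ of reactions $(\mathbf{r},\mathbf{p})$ with $\|\mathbf{r}\|_1\in\{1,2\}$, $\|\mathbf{r}\|_1\le\|\mathbf{p}\|_1$, each reactant vector $\mathbf{r}$ with $1\le\|\mathbf{r}\|_1\le2$ having at least one reaction, void reactions ($\mathbf{r}=\mathbf{p}$) being the unique reaction for their reactant vector; the protocol respects finite density (configurations reachable from $\mathbf{c}$ have molecular count $O(\|\mathbf{c}\|_1)$). Configurations $\mathbf{c}\in\mathbb{N}^{\mathcal{S}}$, $\|\mathbf{c}\|_1\ge1$; $(\mathbf{r},\mathbf{p})$ applicable to $\mathbf{c}$ iff $\mathbf{r}\le\mathbf{c}$, producing $\mathbf{c}-\mathbf{r}+\mathbf{p}$; $\operatorname{app}(\mathbf{c})$ the applicable reactions; reachability $\stackrel{*}{\rightharpoonup}$. $\mathrm{stab}(Z)=\{\mathbf{c}\in Z:\mathbf{c}\stackrel{*}{\rightharpoonup}\mathbf{c}'\Rightarrow\mathbf{c}'\in Z\}$, $\mathrm{halt}(Z)=\{\mathbf{c}\in Z:\mathbf{c}\stackrel{*}{\rightharpoonup}\mathbf{c}'\Rightarrow\mathbf{c}'=\mathbf{c}\}$.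 An execution $\langle\mathbf{c}^t,\alpha^t\rangle_{t\ge0}$ has $\alpha^t\in\operatorname{app}(\mathbf{c}^t)$, $\mathbf{c}^{t+1}=\alpha^t(\mathbf{c}^t)$. Weakly fair: for all $t$ and $\alpha\in\operatorname{app}(\mathbf{c}^t)$ there is $t'\ge t$ with $\alpha^{t'}=\alpha$ or $\alpha\notin\operatorname{app}(\mathbf{c}^{t'})$. Strongly fair: if a configuration $\mathbf{c}$ appears infinitely often then every configuration reachable from $\mathbf{c}$ appears infinitely often. Stabilizes (halts) into $Z$: some $\mathbf{c}^t\in\mathrm{stab}(Z)$ ($\mathrm{halt}(Z)$). Interface $\mathcal{I}=(\mathcal{U},\mu,\mathcal{C})$: $\mu:\mathcal{S}\to\mathcal{U}$, $\mathcal{C}\subseteq\mathbb{N}^{\mathcal{U}}\times\mathbb{N}^{\mathcal{U}}$, $\mu(\mathbf{c})(u)=\sum_{A:\mu(A)=u}\mathbf{c}(A)$, $Z_{\mathcal{I}}(\mathbf{c}^0)=\{\mathbf{c}:(\mu(\mathbf{c}^0),\mu(\mathbf{c}))\in\mathcal{C}\}$; $\mathbf{c}^0$ valid if $Z_{\mathcal{I}}(\mathbf{c}^0)\ne\emptyset$. $\Pi$ is stably (haltingly) correct w.r.t. $\mathcal{I}$ under a weakly (resp. strongly) fair scheduler if every weakly (resp. strongly) fair execution from a valid $\mathbf{c}^0$ stabilizes (halts) into $Z_{\mathcal{I}}(\mathbf{c}^0)$. *)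

theory Defs
  imports Main
begin

text \<open>Species: a finite type 'a. Configurations: vectors 'a \<Rightarrow> nat.
  Reactions: pairs (reactant vector, product vector).\<close>

type_synonym 'a config = "'a \<Rightarrow> nat"
type_synonym 'a reaction = "'a config \<times> 'a config"

definition vnorm :: "('a::finite) config \<Rightarrow> nat" where
  "vnorm c = (\<Sum>A\<in>UNIV. c A)"

definition is_config :: "('a::finite) config \<Rightarrow> bool" where
  "is_config c \<longleftrightarrow> vnorm c \<ge> 1"

definition app :: "('a::finite) reaction set \<Rightarrow> 'a config \<Rightarrow> 'a reaction set" where
  "app R c = {(r, p) \<in> R. r \<le> c}"

definition apply_rxn :: "'a reaction \<Rightarrow> 'a config \<Rightarrow> 'a config" where
  "apply_rxn \<alpha> c = (\<lambda>A. c A - fst \<alpha> A + snd \<alpha> A)"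

definition step :: "('a::finite) reaction set \<Rightarrow> 'a config \<Rightarrow> 'a config \<Rightarrow> bool" where
  "step R c c' \<longleftrightarrow> (\<exists>\<alpha>\<in>app R c. c' = apply_rxn \<alpha> c)"

definition reach :: "('a::finite) reaction set \<Rightarrow> 'a config \<Rightarrow> 'a config \<Rightarrow> bool" where
  "reach R = (step R)\<^sup>*\<^sup>*"

text \<open>Well-formed CRN protocol (including finite density).\<close>
definition crn_protocol :: "('a::finite) reaction set \<Rightarrow> bool" where
  "crn_protocol R \<longleftrightarrow>
     finite R \<and>
     (\<forall>(r, p)\<in>R. vnorm r \<in> {1, 2} \<and> vnorm r \<le> vnorm p) \<and>
     (\<forall>r. 1 \<le> vnorm r \<and> vnorm r \<le> 2 \<longrightarrow> (\<exists>p. (r, p) \<in> R)) \<and>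
     (\<forall>r p. (r, r) \<in> R \<and> (r, p) \<in> R \<longrightarrow> p = r) \<and>
     (\<exists>K::nat. \<forall>c c'. is_config c \<and> reach R c c' \<longrightarrow> vnorm c' \<le> K * vnorm c)"

definition stab :: "('a::finite) reaction set \<Rightarrow> 'a config set \<Rightarrow> 'a config set" where
  "stab R Z = {c \<in> Z. \<forall>c'. reach R c c' \<longrightarrow> c' \<in> Z}"

definition halt :: "('a::finite) reaction set \<Rightarrow> 'a config set \<Rightarrow> 'a config set" where
  "halt R Z = {c \<in> Z. \<forall>c'. reach R c c' \<longrightarrow> c' = c}"

definition execution ::
  "('a::finite) reaction set \<Rightarrow> (nat \<Rightarrow> 'a config) \<Rightarrow> (nat \<Rightarrow> 'a reaction) \<Rightarrow> bool" where
  "execution R c \<alpha> \<longleftrightarrow> (\<forall>t. \<alpha> t \<in> app R (c t) \<and> c (Suc t) = apply_rxn (\<alpha> t) (c t))"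

definition weakly_fair ::
  "('a::finite) reaction set \<Rightarrow> (nat \<Rightarrow> 'a config) \<Rightarrow> (nat \<Rightarrow> 'a reaction) \<Rightarrow> bool" where
  "weakly_fair R c \<alpha> \<longleftrightarrow>
     (\<forall>t. \<forall>\<beta>\<in>app R (c t). \<exists>t'\<ge>t. \<alpha> t' = \<beta> \<or> \<beta> \<notin> app R (c t'))"

definition strongly_fair ::
  "('a::finite) reaction set \<Rightarrow> (nat \<Rightarrow> 'a config) \<Rightarrow> (nat \<Rightarrow> 'a reaction) \<Rightarrow> bool" where
  "strongly_fair R c \<alpha> \<longleftrightarrow>
     (\<forall>d. (\<forall>n. \<exists>t\<ge>n. c t = d) \<longrightarrow>
        (\<forall>d'. reach R d d' \<longrightarrow> (\<forall>n. \<exists>t\<ge>n. c t = d')))"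

text \<open>Interface (U, mu, C): species map mu :: 'a \<Rightarrow> 'u, constraint C.\<close>
definition mu_img :: "('a::finite \<Rightarrow> 'u) \<Rightarrow> 'a config \<Rightarrow> ('u \<Rightarrow> nat)" where
  "mu_img \<mu> c = (\<lambda>u. \<Sum>A\<in>{A. \<mu> A = u}. c A)"

definition Z_I :: "('a::finite \<Rightarrow> 'u) \<Rightarrow> (('u \<Rightarrow> nat) \<times> ('u \<Rightarrow> nat)) set
                    \<Rightarrow> 'a config \<Rightarrow> 'a config set" where
  "Z_I \<mu> C c0 = {c. is_config c \<and> (mu_img \<mu> c0, mu_img \<mu> c) \<in> C}"

definition valid_init :: "('a::finite \<Rightarrow> 'u) \<Rightarrow> (('u \<Rightarrow> nat) \<times> ('u \<Rightarrow> nat)) set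
                    \<Rightarrow> 'a config \<Rightarrow> bool" where
  "valid_init \<mu> C c0 \<longleftrightarrow> is_config c0 \<and> Z_I \<mu> C c0 \<noteq> {}"

definition correct_under ::
  "('a::finite) reaction set
   \<Rightarrow> ('a config set \<Rightarrow> 'a config set)
   \<Rightarrow> ((nat \<Rightarrow> 'a config) \<Rightarrow> (nat \<Rightarrow> 'a reaction) \<Rightarrow> bool)
   \<Rightarrow> ('a \<Rightarrow> 'u) \<Rightarrow> (('u \<Rightarrow> nat) \<times> ('u \<Rightarrow> nat)) set \<Rightarrow> bool" where
  "correct_under R target fair \<mu> C \<longleftrightarrow>
     (\<forall>c \<alpha>. valid_init \<mu> C (c 0) \<and> execution R c \<alpha> \<and> fair c \<alpha>
        \<longrightarrow> (\<exists>t. c t \<in> target (Z_I \<mu> C (c 0))))"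

definition stably_correct_weak where
  "stably_correct_weak R \<mu> C = correct_under R (stab R) (weakly_fair R) \<mu> C"
definition stably_correct_strong where
  "stably_correct_strong R \<mu> C = correct_under R (stab R) (strongly_fair R) \<mu> C"
definition haltingly_correct_weak where
  "haltingly_correct_weak R \<mu> C = correct_under R (halt R) (weakly_fair R) \<mu> C"
definition haltingly_correct_strong where
  "haltingly_correct_strong R \<mu> C = correct_under R (halt R) (strongly_fair R) \<mu> C"

end

theory Submission
  imports Defs "HOL-Library.Infinite_Set"
begin

text \<open>By finite density a strongly fair execution \<open>c\<close> lives in a finite set of configurations,
  so some configuration \<open>c T\<close> recurs infinitely often. Follow \<open>c\<close> up to time \<open>T\<close> and continue
  with a round-robin (hence weakly fair) execution from \<open>c T\<close>: the result is weakly fair, so it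
  reaches the target at some time \<open>t\<close>. If \<open>t < T\<close> this is a configuration of \<open>c\<close>; otherwise it is
  reachable from the recurring \<open>c T\<close>, and strong fairness makes \<open>c\<close> visit it as well.\<close>

lemma vnorm_apply_rxn:
  assumes "r \<le> c"
  shows "vnorm (apply_rxn (r, p) c) + vnorm r = vnorm c + vnorm p"
proof -
  have "apply_rxn (r, p) c A + r A = c A + p A" for A
    using le_funD[OF assms, of A] by (simp add: apply_rxn_def)
  then show ?thesis
    by (simp add: vnorm_def flip: sum.distrib)
qed

lemma vnorm_le_step:
  assumes "crn_protocol R" "step R c c'"
  shows "vnorm c \<le> vnorm c'"
proof -
  obtain r p where rp: "(r, p) \<in> R" "r \<le> c" "c' = apply_rxn (r, p) c"
    using assms(2) by (auto simp: step_def app_def)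
  have "vnorm r \<le> vnorm p"
    using assms(1) rp(1) by (auto simp: crn_protocol_def)
  with vnorm_apply_rxn[OF rp(2), of p] show ?thesis
    unfolding rp(3) by linarith
qed

lemma is_config_step: "crn_protocol R \<Longrightarrow> step R c c' \<Longrightarrow> is_config c \<Longrightarrow> is_config c'"
  using vnorm_le_step by (fastforce simp: is_config_def)

lemma is_config_reach:
  assumes "crn_protocol R" "reach R c c'" "is_config c"
  shows "is_config c'"
  using assms(2,3) unfolding reach_def
  by induction (auto intro: is_config_step[OF assms(1)])

lemma app_nonempty:
  assumes "crn_protocol R" "is_config c"
  shows "app R c \<noteq> {}"
proof -
  obtain A where "c A \<noteq> 0"
    using assms(2) by (force simp: is_config_def vnorm_def)
  define r :: "'a config" where "r = (\<lambda>_. 0)(A := 1)"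
  have "vnorm r = 1"
    by (simp add: vnorm_def r_def)
  then obtain p where "(r, p) \<in> R"
    using assms(1) by (fastforce simp: crn_protocol_def)
  moreover have "r \<le> c"
    using \<open>c A \<noteq> 0\<close> by (simp add: r_def le_fun_def)
  ultimately show ?thesis
    by (auto simp: app_def)
qed

lemma execution_reach:
  assumes "execution R c \<alpha>" "s \<le> t"
  shows "reach R (c s) (c t)"
  using assms(2)
proof (induction t rule: dec_induct)
  case (step t)
  have "step R (c t) (c (Suc t))"
    using assms(1) by (auto simp: execution_def step_def)
  with step.IH show ?case
    by (simp add: reach_def)
qed (simp add: reach_def)

lemma finite_vnorm_le: "finite {c :: ('a::finite) config. vnorm c \<le> N}"
proof (rule finite_subset)
  have "c A \<le> vnorm c" for c :: "'a config" and A
    unfolding vnorm_def by (rule member_le_sum) simp_all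
  then show "{c :: 'a config. vnorm c \<le> N} \<subseteq>
      {c. \<forall>A. (A \<in> UNIV \<longrightarrow> c A \<in> {..N}) \<and> (A \<notin> UNIV \<longrightarrow> c A = 0)}"
    using le_trans by blast
qed (rule finite_set_of_finite_funs; simp)

lemma finite_range_recurrent:
  fixes f :: "nat \<Rightarrow> 'b"
  assumes "finite (range f)"
  obtains T where "\<forall>n. \<exists>t\<ge>n. f t = f T"
proof -
  obtain y where "y \<in> range f" "infinite (f -` {y})"
    using assms by (rule inf_img_fin_domE) simp
  then show thesis
    using that by (auto simp: infinite_nat_iff_unbounded_le)
qed

lemma execution_recurrent:
  assumes "crn_protocol R" "is_config (c 0)" "execution R c \<alpha>"
  obtains T where "\<forall>n. \<exists>t\<ge>n. c t = c T"
proof (rule finite_range_recurrent)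
  obtain K where K: "\<And>c c'. is_config c \<Longrightarrow> reach R c c' \<Longrightarrow> vnorm c' \<le> K * vnorm c"
    using assms(1) unfolding crn_protocol_def by blast
  have "range c \<subseteq> {d. vnorm d \<le> K * vnorm (c 0)}"
    using K[OF assms(2) execution_reach[OF assms(3)]] by auto
  then show "finite (range c)"
    using finite_vnorm_le finite_subset by blast
qed (use that in blast)

definition round_robin :: "'a reaction list \<Rightarrow> ('a::finite) reaction set \<Rightarrow> nat \<Rightarrow> 'a config \<Rightarrow> 'a reaction" where
  "round_robin rs R t c =
     (let \<beta> = rs ! (t mod length rs) in if \<beta> \<in> app R c then \<beta> else (SOME \<beta>. \<beta> \<in> app R c))"

definition scheduled_run :: "(nat \<Rightarrow> 'a config \<Rightarrow> 'a reaction) \<Rightarrow> 'a config \<Rightarrow> nat \<Rightarrow> 'a config" where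
  "scheduled_run sched d = rec_nat d (\<lambda>t c. apply_rxn (sched t c) c)"

lemma scheduled_run_0 [simp]: "scheduled_run sched d 0 = d"
  and scheduled_run_Suc [simp]:
    "scheduled_run sched d (Suc t) = apply_rxn (sched t (scheduled_run sched d t)) (scheduled_run sched d t)"
  by (simp_all add: scheduled_run_def)

lemma round_robin_app:
  "crn_protocol R \<Longrightarrow> is_config c \<Longrightarrow> round_robin rs R t c \<in> app R c"
  using app_nonempty by (auto simp: round_robin_def Let_def some_in_eq)

lemma execution_scheduled_run_round_robin:
  fixes rs :: "('a::finite) reaction list"
  assumes "crn_protocol R" "is_config d"
  defines "e \<equiv> scheduled_run (round_robin rs R) d"
  shows "execution R e (\<lambda>t. round_robin rs R t (e t))"
proof -
  have "is_config (e t)" for t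
  proof (induction t)
    case (Suc t)
    then have "step R (e t) (e (Suc t))"
      using round_robin_app[OF assms(1)] by (auto simp: step_def e_def)
    with Suc show ?case
      using is_config_step[OF assms(1)] by blast
  qed (simp add: e_def assms(2))
  then show ?thesis
    using round_robin_app[OF assms(1)] by (simp add: execution_def e_def)
qed

lemma weakly_fair_round_robin:
  assumes "set rs = R"
  shows "weakly_fair R c (\<lambda>t. round_robin rs R t (c t))"
  unfolding weakly_fair_def
proof (intro allI ballI)
  fix t \<beta> assume "\<beta> \<in> app R (c t)"
  then obtain i where i: "i < length rs" "rs ! i = \<beta>"
    using assms by (auto simp: app_def in_set_conv_nth)
  define t' where "t' = length rs * t + i"
  have "t \<le> t'"
    using i(1) by (cases rs) (auto simp: t'_def)
  moreover have "t' mod length rs = i"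
    using i(1) by (simp add: t'_def)
  then have "round_robin rs R t' (c t') = \<beta> \<or> \<beta> \<notin> app R (c t')"
    using i(2) by (simp add: round_robin_def Let_def)
  ultimately show "\<exists>t'\<ge>t. round_robin rs R t' (c t') = \<beta> \<or> \<beta> \<notin> app R (c t')"
    by blast
qed

lemma weakly_fair_execution_exists:
  assumes "crn_protocol R" "is_config d"
  obtains e \<beta> where "e 0 = d" "execution R e \<beta>" "weakly_fair R e \<beta>"
proof -
  have "finite R"
    using assms(1) by (simp add: crn_protocol_def)
  then obtain rs where "set rs = R"
    using finite_list by blast
  then show thesis
    by (intro that[OF scheduled_run_0 execution_scheduled_run_round_robin[OF assms]] weakly_fair_round_robin)
qed

definition splice_at :: "nat \<Rightarrow> (nat \<Rightarrow> 'b) \<Rightarrow> (nat \<Rightarrow> 'b) \<Rightarrow> nat \<Rightarrow> 'b" where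
  "splice_at T f g t = (if t < T then f t else g (t - T))"

lemma splice_at_0: "g 0 = f T \<Longrightarrow> splice_at T f g 0 = f 0"
  by (simp add: splice_at_def)

lemma execution_splice_at:
  assumes "execution R c \<alpha>" "execution R e \<beta>" "e 0 = c T"
  shows "execution R (splice_at T c e) (splice_at T \<alpha> \<beta>)"
  unfolding execution_def
proof
  fix t
  have "splice_at T c e (Suc t) = (if t < T then c (Suc t) else e (Suc (t - T)))"
    using assms(3) by (cases "Suc t = T") (auto simp: splice_at_def Suc_diff_le)
  then show "splice_at T \<alpha> \<beta> t \<in> app R (splice_at T c e t) \<and>
      splice_at T c e (Suc t) = apply_rxn (splice_at T \<alpha> \<beta> t) (splice_at T c e t)"
    using assms(1,2) by (simp add: splice_at_def execution_def)
qed

lemma weakly_fair_splice_at: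
  assumes "weakly_fair R e \<beta>"
  shows "weakly_fair R (splice_at T c e) (splice_at T \<alpha> \<beta>)"
  unfolding weakly_fair_def
proof (intro allI ballI)
  fix t \<gamma>
  \<comment> \<open>for \<open>t < T\<close> the truncated difference \<open>t - T\<close> is \<open>0\<close>, so both cases are handled at once\<close>
  obtain s where "s \<ge> t - T" "\<beta> s = \<gamma> \<or> \<gamma> \<notin> app R (e s)"
    using assms by (cases "\<gamma> \<in> app R (e (t - T))") (auto simp: weakly_fair_def)
  then show "\<exists>t'\<ge>t. splice_at T \<alpha> \<beta> t' = \<gamma> \<or> \<gamma> \<notin> app R (splice_at T c e t')"
    by (intro exI[of _ "s + T"]) (auto simp: splice_at_def)
qed

lemma correct_under_strongly_fair_if_weakly_fair:
  assumes "crn_protocol R" and weak: "correct_under R target (weakly_fair R) \<mu> C"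
  shows "correct_under R target (strongly_fair R) \<mu> C"
  unfolding correct_under_def
proof (intro allI impI, elim conjE)
  fix c \<alpha>
  assume valid: "valid_init \<mu> C (c 0)" and exec: "execution R c \<alpha>" and strong: "strongly_fair R c \<alpha>"
  have "is_config (c 0)"
    using valid by (simp add: valid_init_def)
  obtain T where T: "\<forall>n. \<exists>t\<ge>n. c t = c T"
    using execution_recurrent[OF assms(1) \<open>is_config (c 0)\<close> exec] .
  have "is_config (c T)"
    using is_config_reach[OF assms(1) execution_reach[OF exec]] \<open>is_config (c 0)\<close> by blast
  then obtain e \<beta> where e: "e 0 = c T" "execution R e \<beta>" "weakly_fair R e \<beta>"
    using weakly_fair_execution_exists[OF assms(1)] by blast
  let ?c' = "splice_at T c e"
  have "execution R ?c' (splice_at T \<alpha> \<beta>)" "weakly_fair R ?c' (splice_at T \<alpha> \<beta>)"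
    using execution_splice_at[OF exec e(2,1)] weakly_fair_splice_at[OF e(3)] by blast+
  moreover have "?c' 0 = c 0"
    using e(1) by (rule splice_at_0)
  ultimately obtain t where t: "?c' t \<in> target (Z_I \<mu> C (c 0))"
    using weak valid unfolding correct_under_def by metis
  have "\<exists>s. c s = ?c' t"
  proof (cases "t < T")
    case False
    then have "reach R (c T) (?c' t)"
      using execution_reach[OF e(2), of 0 "t - T"] e(1) by (simp add: splice_at_def)
    then show ?thesis
      using strong T by (force simp: strongly_fair_def)
  qed (auto simp: splice_at_def)
  with t show "\<exists>t. c t \<in> target (Z_I \<mu> C (c 0))"
    by metis
qed

theorem corollary3p4:
  fixes R :: "('a::finite) reaction set" and \<mu> :: "'a \<Rightarrow> 'u"
    and C :: "(('u \<Rightarrow> nat) \<times> ('u \<Rightarrow> nat)) set"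
  assumes "crn_protocol R"
  shows "(stably_correct_weak R \<mu> C \<longrightarrow> stably_correct_strong R \<mu> C) \<and>
         (haltingly_correct_weak R \<mu> C \<longrightarrow> haltingly_correct_strong R \<mu> C)"
  using correct_under_strongly_fair_if_weakly_fair[OF assms]
  unfolding stably_correct_weak_def stably_correct_strong_def
    haltingly_correct_weak_def haltingly_correct_strong_def
  by blast

end
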